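(* Let $\psi:(0,\infty)\to(0,\infty)$ be a non-decreasing function such that $\sum_{k=1}^{\infty}\frac{1}{\psi(k)}=\infty$. There is an absolute constant $C>0$ such that for Lebesgue-almost every $\alpha$ there exist infinitely many $K\in\mathbb{N}$ satisfying both (a) $\psi(K)<a_K<K^2$, and (b) $\sum_{\ell=1}^{K-1}a_\ell\le C\,K\log K$.
   Context: Every irrational $\alpha$ has a unique continued fraction expansion $\alpha=[a_0;a_1,a_2,\dots]$ with partial quotients $a_\ell=a_\ell(\alpha)$ (positive integers for $\ell\ge1$). *)

theory Defs
  imports "HOL-Analysis.Analysis"
begin

definition gauss_map :: "real \<Rightarrow> real" where
  "gauss_map x = frac (1 / x)"

text \<open>For irrational alpha all x_n lie in (0,1) and this is the usual expansion.\<close>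
definition cf_quot :: "real \<Rightarrow> nat \<Rightarrow> int" where
  "cf_quot \<alpha> l = (if l = 0 then \<lfloor>\<alpha>\<rfloor>
                    else \<lfloor>1 / ((gauss_map ^^ (l - 1)) (frac \<alpha>))\<rfloor>)"

end

theory Submission
  imports Defs
begin

text \<open>A Borel-Bernstein argument. The digits are quasi-independent under Lebesgue measure: the
  length of the cylinder of a word uv is that of u times that of v, up to the factors 4 and 1/8.
  Let E_K be the event that a_K lies in (\<psi>(K), K^2) and a_1 + ... + a_(K-1) \<le> 256 K log K. The
  probability r_K of the first condition is at least 1/(\<psi>(K) + 1) - 1/K^2, so \<Sum> r_K diverges.
  Truncating digits at K^2 and applying Markov's inequality, the digit-sum condition fails with
  probability at most 1/8, so E_K has conditional probability at least r_K/16 in every cylinder of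
  lower level, while E_i \<inter> E_j has conditional probability O(r_i r_j). By the Bonferroni inequality
  on blocks of indices with \<Sum> r_K small but bounded below, the union of the E_K with K \<ge> m fills a
  fixed fraction of every cylinder, hence has full measure. Fractional parts transfer the result
  from (0, 1) to the real line.\<close>

lemma inverse_square_antimono: "0 < a \<Longrightarrow> a \<le> b \<Longrightarrow> 1 / b ^ 2 \<le> 1 / (a::real) ^ 2"
  by (simp add: frac_le power_mono)

lemma ln_ge_1: "3 \<le> x \<Longrightarrow> 1 \<le> ln (x::real)"
  using exp_le by (subst ln_ge_iff) auto

lemma sum_inverse_Suc_le_ln: "(\<Sum>k=1..M. 1 / (real k + 1)) \<le> ln (real M + 1)"
proof (induction M)
  case (Suc M)
  have "ln ((real M + 1) / (real M + 2)) \<le> (real M + 1) / (real M + 2) - 1"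
    by (rule ln_le_minus_one) simp
  also have "\<dots> = - (1 / (real M + 2))" by (simp add: field_simps)
  finally have "1 / (real M + 2) \<le> ln (real M + 2) - ln (real M + 1)"
    by (simp add: ln_div)
  then show ?case using Suc by (simp add: add.commute)
qed simp

lemma summable_inverse_of_summable_inverse_add_one:
  fixes a :: "nat \<Rightarrow> real"
  assumes pos: "\<And>k. 0 < a k" and sum: "summable (\<lambda>k. 1 / (a k + 1))"
  shows "summable (\<lambda>k. 1 / a k)"
proof (rule summable_comparison_test_ev)
  have "eventually (\<lambda>k. 1 / (a k + 1) < 1 / 2) sequentially"
    using summable_LIMSEQ_zero[OF sum] by (rule order_tendstoD) simp
  then show "eventually (\<lambda>k. norm (1 / a k) \<le> 2 * (1 / (a k + 1))) sequentially"
  proof (rule eventually_mono)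
    fix k assume "1 / (a k + 1) < 1 / 2"
    then have "1 < a k" using pos[of k] by (simp add: field_simps)
    then show "norm (1 / a k) \<le> 2 * (1 / (a k + 1))" using pos[of k] by (simp add: field_simps)
  qed
  show "summable (\<lambda>k. 2 * (1 / (a k + 1)))" using sum by (rule summable_mult)
qed

lemma not_summable_block:
  fixes f :: "nat \<Rightarrow> real"
  assumes "\<not> summable f" "\<And>k. 0 \<le> f k" "0 < s"
  shows "\<exists>S. finite S \<and> S \<subseteq> {a..} \<and> s \<le> sum f S \<and> (sum f S \<le> 2 * s \<or> card S = 1)"
proof -
  have "\<exists>b. s \<le> sum f {a..b}"
  proof (rule ccontr)
    assume "\<not> (\<exists>b. s \<le> sum f {a..b})"
    moreover have "(\<Sum>k\<le>n. f (k + a)) = sum f {a..n + a}" for n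
      by (induction n) (auto simp: add.commute)
    ultimately have "summable (\<lambda>k. f (k + a))"
      using assms(2) by (intro bounded_imp_summable[where B = s]) (auto simp: not_le less_imp_le)
    then show False using assms(1) by simp
  qed
  define b where "b = (LEAST b. s \<le> sum f {a..b})"
  have b: "s \<le> sum f {a..b}" unfolding b_def using \<open>\<exists>b. _\<close> by (rule LeastI_ex)
  then have ab: "a \<le> b" using assms(3) by (cases "a \<le> b") auto
  show ?thesis
  proof (cases "s \<le> f b")
    case True
    then show ?thesis using ab by (intro exI[of _ "{b}"]) auto
  next
    case False
    then have "b \<noteq> a" using b by auto
    then have "\<not> s \<le> sum f {a..b - 1}"
      using ab by (intro not_less_Least) (auto simp: b_def[symmetric])
    moreover have "sum f {a..b} = sum f {a..b - 1} + f b"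
      using ab \<open>b \<noteq> a\<close> sum.cl_ivl_Suc[of f a "b - 1"] by simp
    ultimately show ?thesis using b False by (intro exI[of _ "{a..b}"]) auto
  qed
qed

lemma Rats_sets_borel [measurable]: "(\<rat> :: real set) \<in> sets borel"
  using countable_imp_null_set_lborel[OF countable_rat] by (auto simp: null_sets_def)

lemma fmeasurable_Ioc: "{a<..b::real} \<in> fmeasurable lborel"
  by (rule fmeasurableI2[OF fmeasurable_cbox[of a b, unfolded cbox_interval]]) auto

lemma measure_UNION_ge_pairwise:
  fixes A :: "'i::linorder \<Rightarrow> 'a set"
  assumes "finite S" "\<And>i. i \<in> S \<Longrightarrow> A i \<in> fmeasurable M"
  shows "(\<Sum>i\<in>S. measure M (A i)) - (\<Sum>i\<in>S. \<Sum>j\<in>{j\<in>S. j < i}. measure M (A j \<inter> A i))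
           \<le> measure M (\<Union>i\<in>S. A i)"
  using assms
proof (induction S rule: finite_linorder_max_induct)
  case (insert b S)
  define X where "X = (\<Union>i\<in>S. A i)"
  have fm: "\<And>i. i \<in> S \<Longrightarrow> A i \<in> fmeasurable M" and fb: "A b \<in> fmeasurable M"
    using insert.prems by auto
  have bS: "b \<notin> S" using insert.hyps by auto
  have fX: "X \<in> fmeasurable M" unfolding X_def using fm insert.hyps(1) by (intro fmeasurable.finite_UN)
  have "X \<inter> A b = (\<Union>j\<in>S. A j \<inter> A b)" by (auto simp: X_def)
  then have int: "measure M (X \<inter> A b) \<le> (\<Sum>j\<in>S. measure M (A j \<inter> A b))"
    using measure_UNION_le[OF insert.hyps(1), of "\<lambda>j. A j \<inter> A b" M] fm fb by (auto simp: fmeasurable_def)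
  have "{j\<in>insert b S. j < b} = S" "\<And>i. i \<in> S \<Longrightarrow> {j\<in>insert b S. j < i} = {j\<in>S. j < i}"
    using insert.hyps(2) by auto
  then have pairs: "(\<Sum>i\<in>insert b S. \<Sum>j\<in>{j\<in>insert b S. j < i}. measure M (A j \<inter> A i))
     = (\<Sum>j\<in>S. measure M (A j \<inter> A b)) + (\<Sum>i\<in>S. \<Sum>j\<in>{j\<in>S. j < i}. measure M (A j \<inter> A i))"
    by (simp add: sum.insert[OF insert.hyps(1) bS])
  have "(\<Union>i\<in>insert b S. A i) = X \<union> A b" by (auto simp: X_def)
  then show ?case
    using measure_Un3[OF fX fb] int pairs insert.IH[OF fm] bS insert.hyps(1) by (simp add: X_def)
qed simp

lemma AE_frac_notin: "N \<in> null_sets lborel \<Longrightarrow> AE \<alpha> in lborel. frac \<alpha> \<notin> N"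
proof (rule AE_I')
  assume N: "N \<in> null_sets lborel"
  show "(\<Union>z\<in>(UNIV::int set). {x. x - of_int z \<in> N}) \<in> null_sets lborel"
    by (rule null_sets_UN') (auto intro: null_sets_translation[OF N])
  show "{\<alpha> \<in> space lborel. \<not> frac \<alpha> \<notin> N} \<subseteq> (\<Union>z\<in>(UNIV::int set). {x. x - of_int z \<in> N})"
    by (auto simp: frac_def)
qed

section \<open>Continuants and cylinder intervals\<close>

fun cf_map :: "nat list \<Rightarrow> real \<Rightarrow> real" where
  "cf_map [] y = y"
| "cf_map (a # u) y = 1 / (real a + cf_map u y)"

text \<open>For a word u = [a1, ..., an] this is (p_n, p_(n-1), q_n, q_(n-1)), so that
  cf_map u y = (p_n + p_(n-1) y) / (q_n + q_(n-1) y).\<close>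
fun cf_matrix :: "nat list \<Rightarrow> nat \<times> nat \<times> nat \<times> nat" where
  "cf_matrix [] = (0, 1, 1, 0)"
| "cf_matrix (a # u) = (case cf_matrix u of (P, P', Q, Q') \<Rightarrow> (Q, Q', a * Q + P, a * Q' + P'))"

definition mat2_mult :: "nat \<times> nat \<times> nat \<times> nat \<Rightarrow> nat \<times> nat \<times> nat \<times> nat \<Rightarrow> nat \<times> nat \<times> nat \<times> nat" where
  "mat2_mult A B = (case A of (P, P', Q, Q') \<Rightarrow> case B of (R, R', S, S') \<Rightarrow>
     (P' * R + P * S, P' * R' + P * S', Q' * R + Q * S, Q' * R' + Q * S'))"

definition cf_bounds :: "nat \<times> nat \<times> nat \<times> nat \<Rightarrow> bool" where
  "cf_bounds A = (case A of (P, P', Q, Q') \<Rightarrow>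
     1 \<le> Q \<and> Q' \<le> Q \<and> P \<le> Q \<and> P' \<le> Q \<and> (P' \<le> Q' \<or> P = 0))"

lemma cf_map_append: "cf_map (u @ v) y = cf_map u (cf_map v y)"
  by (induction u) auto

lemma cf_matrix_append: "cf_matrix (u @ v) = mat2_mult (cf_matrix u) (cf_matrix v)"
proof (induction u)
  case Nil
  then show ?case by (cases "cf_matrix v") (auto simp: mat2_mult_def)
next
  case (Cons a u)
  obtain P P' Q Q' where u: "cf_matrix u = (P, P', Q, Q')" by (cases "cf_matrix u")
  obtain R R' S S' where v: "cf_matrix v = (R, R', S, S')" by (cases "cf_matrix v")
  show ?case using Cons u v by (simp add: mat2_mult_def algebra_simps)
qed

lemma cf_matrix_snoc:
  "cf_matrix u = (P, P', Q, Q') \<Longrightarrow> cf_matrix (u @ [a]) = (P' + P * a, P, Q' + Q * a, Q)"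
  by (simp add: cf_matrix_append mat2_mult_def)

lemma cf_bounds_cf_matrix: "0 \<notin> set u \<Longrightarrow> cf_bounds (cf_matrix u)"
proof (induction u rule: rev_induct)
  case Nil
  then show ?case by (simp add: cf_bounds_def)
next
  case (snoc a u)
  obtain P P' Q Q' where u: "cf_matrix u = (P, P', Q, Q')" by (cases "cf_matrix u")
  have a: "1 \<le> a" using snoc.prems by (simp add: Suc_le_eq)
  have I: "1 \<le> Q" "Q' \<le> Q" "P \<le> Q" "P' \<le> Q" "P' \<le> Q' \<or> P = 0"
    using snoc u by (auto simp: cf_bounds_def)
  have Qa: "Q \<le> Q * a" using a by simp
  have "P * a \<le> Q * a" using I(3) by simp
  then have "P' + P * a \<le> Q' + Q * a" using I(4,5) Qa by (auto; linarith)
  then show ?case unfolding cf_matrix_snoc[OF u] cf_bounds_def prod.case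
    using I Qa by (intro conjI) linarith+
qed

lemma cf_matrix_det:
  "cf_matrix u = (P, P', Q, Q') \<Longrightarrow>
    real P * real Q' - real P' * real Q = (if even (length u) then -1 else 1)"
proof (induction u arbitrary: P P' Q Q')
  case (Cons a u)
  then show ?case by (cases "cf_matrix u") (auto simp: algebra_simps)
qed simp

lemma cf_map_eq_matrix:
  assumes "0 \<notin> set u" "0 \<le> y" "cf_matrix u = (P, P', Q, Q')"
  shows "cf_map u y = (real P + real P' * y) / (real Q + real Q' * y)"
  using assms
proof (induction u arbitrary: P P' Q Q')
  case Nil
  then show ?case by auto
next
  case (Cons a u)
  obtain R R' S S' where u: "cf_matrix u = (R, R', S, S')" by (cases "cf_matrix u")
  have "1 \<le> S" using cf_bounds_cf_matrix[of u] Cons.prems(1) u by (simp add: cf_bounds_def)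
  then have S: "real S + real S' * y > 0" using Cons.prems(2) by (simp add: add_pos_nonneg)
  have "cf_map (a # u) y = 1 / (real a + (real R + real R' * y) / (real S + real S' * y))"
    using Cons u by simp
  also have "\<dots> = (real S + real S' * y) / (real a * (real S + real S' * y) + (real R + real R' * y))"
    using S by (simp add: field_simps)
  also have "\<dots> = (real P + real P' * y) / (real Q + real Q' * y)"
    using Cons.prems(3) u by (auto simp: algebra_simps)
  finally show ?case .
qed

definition cyl_length :: "nat list \<Rightarrow> real" where
  "cyl_length u = (case cf_matrix u of (P, P', Q, Q') \<Rightarrow> 1 / (real Q * (real Q + real Q')))"

definition cyl_interval :: "nat list \<Rightarrow> real set" where
  "cyl_interval u = cf_map u ` {0<..<1}"

lemma image_frac_linear_Ioo:
  fixes Q Q' :: real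
  assumes "Q > 0" "Q' \<ge> 0"
  shows "(\<lambda>y. y / (Q * (Q + Q' * y))) ` {0<..<1} = {0<..<1 / (Q * (Q + Q'))}"
proof (intro equalityI subsetI)
  fix t assume "t \<in> (\<lambda>y. y / (Q * (Q + Q' * y))) ` {0<..<1}"
  then obtain y where y: "0 < y" "y < 1" and t: "t = y / (Q * (Q + Q' * y))" by auto
  have d: "Q + Q' * y > 0" using assms y by (simp add: add_pos_nonneg)
  have "y * (Q * (Q + Q')) < 1 * (Q * (Q + Q' * y))"
    using y assms by (simp add: algebra_simps)
  then show "t \<in> {0<..<1 / (Q * (Q + Q'))}"
    unfolding t using d assms y by (simp add: divide_simps add_pos_nonneg)
next
  fix t assume "t \<in> {0<..<1 / (Q * (Q + Q'))}"
  then have t0: "0 < t" and t1: "t * (Q * (Q + Q')) < 1"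
    using assms by (auto simp: field_simps add_pos_nonneg)
  have "0 \<le> t * Q * Q" using t0 assms by simp
  then have e: "1 - t * Q * Q' > 0" using t1 by (simp add: algebra_simps)
  define y where "y = t * Q\<^sup>2 / (1 - t * Q * Q')"
  have "0 < y" "y < 1" unfolding y_def using e t0 t1 assms by (simp_all add: field_simps power2_eq_square)
  moreover have "Q + Q' * y = Q / (1 - t * Q * Q')"
    unfolding y_def using e by (simp add: field_simps power2_eq_square)
  then have "t = y / (Q * (Q + Q' * y))"
    unfolding y_def using e assms by (simp add: field_simps power2_eq_square)
  ultimately show "t \<in> (\<lambda>y. y / (Q * (Q + Q' * y))) ` {0<..<1}" by auto
qed

text \<open>The sign of the determinant decides on which side of p_n/q_n the cylinder lies.\<close>
lemma cyl_interval_eq: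
  assumes "0 \<notin> set u" "cf_matrix u = (P, P', Q, Q')"
  shows "cyl_interval u = (if even (length u) then {real P / real Q <..< real P / real Q + cyl_length u}
                           else {real P / real Q - cyl_length u <..< real P / real Q})"
proof -
  have Q: "real Q > 0" using cf_bounds_cf_matrix[OF assms(1)] assms(2) by (simp add: cf_bounds_def)
  define d :: real where "d = (if even (length u) then -1 else 1)"
  have det: "real P * real Q' - real P' * real Q = d"
    unfolding d_def by (rule cf_matrix_det[OF assms(2)])
  have cf: "cf_map u y = real P / real Q - d * (y / (real Q * (real Q + real Q' * y)))" if "y \<ge> 0" for y
  proof -
    have D: "real Q + real Q' * y > 0" using Q that by (simp add: add_pos_nonneg)
    have "cf_map u y = real Q * (real P + real P' * y) / (real Q * (real Q + real Q' * y))"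
      using cf_map_eq_matrix[OF assms(1) that assms(2)] Q by simp
    also have "real Q * (real P + real P' * y) = real P * (real Q + real Q' * y) - d * y"
      unfolding det[symmetric] by (simp add: algebra_simps)
    finally show ?thesis using Q D by (simp add: diff_divide_distrib)
  qed
  have "cyl_interval u = (\<lambda>t. real P / real Q - d * t) ` ((\<lambda>y. y / (real Q * (real Q + real Q' * y))) ` {0<..<1})"
    unfolding cyl_interval_def image_image using cf by (intro image_cong) auto
  also have "\<dots> = (\<lambda>t. real P / real Q - d * t) ` {0<..<cyl_length u}"
    using image_frac_linear_Ioo[OF Q, of "real Q'"] assms(2) by (simp add: cyl_length_def)
  also have "\<dots> = (if even (length u) then {real P / real Q <..< real P / real Q + cyl_length u}
                   else {real P / real Q - cyl_length u <..< real P / real Q})"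
  proof (cases "even (length u)")
    case True
    then show ?thesis
      by (auto simp: d_def image_iff intro!: bexI[where x="_ - real P / real Q"])
  next
    case False
    then show ?thesis
      by (auto simp: d_def image_iff intro!: bexI[where x="real P / real Q - _"])
  qed
  finally show ?thesis .
qed

lemma cyl_length_pos: "0 \<notin> set u \<Longrightarrow> cyl_length u > 0"
  using cf_bounds_cf_matrix[of u]
  by (cases "cf_matrix u") (auto simp: cyl_length_def cf_bounds_def add_pos_nonneg)

lemma emeasure_cyl_interval: "0 \<notin> set u \<Longrightarrow> emeasure lborel (cyl_interval u) = cyl_length u"
  using cyl_interval_eq[of u] cyl_length_pos[of u] by (cases "cf_matrix u") auto

lemma cyl_interval_sets [measurable]: "0 \<notin> set u \<Longrightarrow> cyl_interval u \<in> sets lborel"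
  using cyl_interval_eq[of u] by (cases "cf_matrix u") auto

lemma cyl_length_bounds:
  assumes "0 \<notin> set u" "cf_matrix u = (P, P', Q, Q')"
  shows "1 / (2 * real Q ^ 2) \<le> cyl_length u" "cyl_length u \<le> 1 / real Q ^ 2"
proof -
  have Q: "1 \<le> Q" "Q' \<le> Q" using cf_bounds_cf_matrix[OF assms(1)] assms(2) by (auto simp: cf_bounds_def)
  have "real Q * real Q \<le> real Q * (real Q + real Q')" "real Q * (real Q + real Q') \<le> 2 * real Q ^ 2"
    using Q by (auto simp: power2_eq_square algebra_simps)
  then show "1 / (2 * real Q ^ 2) \<le> cyl_length u" "cyl_length u \<le> 1 / real Q ^ 2"
    using Q assms(2) by (auto simp: cyl_length_def power2_eq_square intro!: divide_left_mono)
qed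

lemma cf_denom_append_bounds:
  assumes "0 \<notin> set u" "0 \<notin> set v"
    and "cf_matrix u = (P, P', Q, Q')" "cf_matrix v = (R, R', S, S')" "cf_matrix (u @ v) = (D, D', E, E')"
  shows "real Q * real S \<le> real E" "real E \<le> 2 * (real Q * real S)"
proof -
  have "Q' \<le> Q" "R \<le> S" using cf_bounds_cf_matrix assms by (force simp: cf_bounds_def)+
  then have "real Q' * real R \<le> real Q * real S" by (simp add: mult_mono)
  moreover have "E = Q' * R + Q * S" using assms(3-5) by (simp add: cf_matrix_append mat2_mult_def)
  ultimately show "real Q * real S \<le> real E" "real E \<le> 2 * (real Q * real S)" by simp_all
qed

lemma cyl_length_append:
  assumes "0 \<notin> set u" "0 \<notin> set v"
  shows "cyl_length (u @ v) \<le> 4 * cyl_length u * cyl_length v"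
    "cyl_length u * cyl_length v \<le> 8 * cyl_length (u @ v)"
proof -
  obtain P P' Q Q' where u: "cf_matrix u = (P, P', Q, Q')" by (cases "cf_matrix u")
  obtain R R' S S' where v: "cf_matrix v = (R, R', S, S')" by (cases "cf_matrix v")
  obtain D D' E E' where uv: "cf_matrix (u @ v) = (D, D', E, E')" by (cases "cf_matrix (u @ v)")
  have uv': "0 \<notin> set (u @ v)" using assms by simp
  note Lu = cyl_length_bounds[OF assms(1) u] and Lv = cyl_length_bounds[OF assms(2) v]
    and Luv = cyl_length_bounds[OF uv' uv] and E = cf_denom_append_bounds[OF assms u v uv]
  have "1 \<le> Q" "1 \<le> S"
    using cf_bounds_cf_matrix[OF assms(1)] cf_bounds_cf_matrix[OF assms(2)] u v
    by (simp_all add: cf_bounds_def)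
  then have QS: "0 < real Q * real S" by simp
  have inv_E: "1 / real E ^ 2 \<le> 1 / (real Q * real S) ^ 2" "1 / (2 * (real Q * real S)) ^ 2 \<le> 1 / real E ^ 2"
    using inverse_square_antimono[OF QS E(1)] inverse_square_antimono[OF _ E(2)] E(1) QS by simp_all
  have "cyl_length (u @ v) \<le> 1 / (real Q * real S) ^ 2"
    using Luv(2) inv_E(1) by linarith
  also have "\<dots> = 4 * (1 / (2 * real Q ^ 2)) * (1 / (2 * real S ^ 2))" by (simp add: power_mult_distrib)
  also have "\<dots> \<le> 4 * cyl_length u * cyl_length v"
    using Lu(1) Lv(1) cyl_length_pos[OF assms(1)] by (intro mult_mono) auto
  finally show "cyl_length (u @ v) \<le> 4 * cyl_length u * cyl_length v" .
  have "cyl_length u * cyl_length v \<le> (1 / real Q ^ 2) * (1 / real S ^ 2)"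
    using Lu(2) Lv(2) cyl_length_pos assms by (intro mult_mono) (auto intro: less_imp_le)
  also have "\<dots> = 4 * (1 / (2 * (real Q * real S)) ^ 2)" by (simp add: power_mult_distrib)
  also have "\<dots> \<le> 4 * (1 / real E ^ 2)" using inv_E(2) by simp
  also have "\<dots> \<le> 8 * cyl_length (u @ v)" using Luv(1) by simp
  finally show "cyl_length u * cyl_length v \<le> 8 * cyl_length (u @ v)" .
qed

definition cf_digits :: "nat \<Rightarrow> real \<Rightarrow> nat list" where
  "cf_digits n x = map (\<lambda>l. nat (cf_quot x l)) [1..<Suc n]"

definition unit_irrats :: "real set" where
  "unit_irrats = {0<..<1} - \<rat>"

lemma length_cf_digits [simp]: "length (cf_digits n x) = n"
  by (simp add: cf_digits_def)

lemma nth_cf_digits: "l < n \<Longrightarrow> cf_digits n x ! l = nat (cf_quot x (Suc l))"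
  by (simp add: cf_digits_def nth_upt del: upt_Suc)

lemma take_cf_digits: "m \<le> n \<Longrightarrow> take m (cf_digits n x) = cf_digits m x"
  by (simp add: cf_digits_def take_map take_upt del: upt_Suc)

lemma cf_quot_Suc: "x \<in> {0<..<1} \<Longrightarrow> cf_quot x (Suc l) = \<lfloor>1 / (gauss_map ^^ l) x\<rfloor>"
  by (simp add: cf_quot_def frac_eq)

lemma cf_map_mem_Ioo: "0 \<notin> set u \<Longrightarrow> y \<in> {0<..<1} \<Longrightarrow> cf_map u y \<in> {0<..<1}"
proof (induction u)
  case (Cons a u)
  then have "real a + cf_map u y > 1" by (simp add: Suc_le_eq[symmetric])
  then show ?case by simp
qed simp

lemma gauss_map_inverse_add:
  assumes "z \<in> {0<..<1}"
  shows "gauss_map (1 / (real a + z)) = z"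
proof -
  have "\<lfloor>real a + z\<rfloor> = int a" using assms by (simp add: floor_eq_iff)
  then show ?thesis using assms by (simp add: gauss_map_def frac_def)
qed

lemma funpow_gauss_map_cf_map:
  "0 \<notin> set u \<Longrightarrow> y \<in> {0<..<1} \<Longrightarrow> l \<le> length u \<Longrightarrow>
    (gauss_map ^^ l) (cf_map u y) = cf_map (drop l u) y"
proof (induction l arbitrary: u)
  case (Suc l)
  then obtain a v where u: "u = a # v" by (cases u) auto
  have "(gauss_map ^^ Suc l) (cf_map u y) = (gauss_map ^^ l) (cf_map v y)"
    using cf_map_mem_Ioo[of v y] Suc.prems
    by (simp add: u funpow_Suc_right gauss_map_inverse_add del: funpow.simps)
  then show ?case using Suc u by simp
qed simp

lemma cf_digits_cf_map:
  assumes "0 \<notin> set u" "y \<in> {0<..<1}"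
  shows "cf_digits (length u) (cf_map u y) = u"
proof (rule nth_equalityI)
  fix l assume "l < length (cf_digits (length u) (cf_map u y))"
  then have l: "l < length u" by simp
  have z: "cf_map (drop (Suc l) u) y \<in> {0<..<1}" using assms by (intro cf_map_mem_Ioo) (auto dest: in_set_dropD)
  have "drop l u = u ! l # drop (Suc l) u" using l by (simp add: Cons_nth_drop_Suc)
  then have "cf_quot (cf_map u y) (Suc l) = \<lfloor>real (u ! l) + cf_map (drop (Suc l) u) y\<rfloor>"
    using cf_map_mem_Ioo[OF assms] funpow_gauss_map_cf_map[OF assms] l by (simp add: cf_quot_Suc)
  also have "\<dots> = int (u ! l)" using z by (simp add: floor_eq_iff)
  finally show "cf_digits (length u) (cf_map u y) ! l = u ! l" using l by (simp add: nth_cf_digits)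
qed simp

lemma gauss_map_unit_irrats: "x \<in> unit_irrats \<Longrightarrow> gauss_map x \<in> unit_irrats"
proof -
  assume x: "x \<in> unit_irrats"
  have "1 / x \<notin> \<rat>"
  proof
    assume "1 / x \<in> \<rat>"
    then have "1 / (1 / x) \<in> \<rat>" by (rule Rats_divide[OF Rats_1])
    then show False using x by (simp add: unit_irrats_def)
  qed
  then have r: "frac (1 / x) \<notin> \<rat>"
    using Rats_add[OF _ Rats_of_int, of "frac (1 / x)" "\<lfloor>1 / x\<rfloor>"] by (auto simp: frac_def)
  then show ?thesis using frac_ge_0[of "1 / x"] frac_lt_1[of "1 / x"] Ints_subset_Rats
    by (auto simp: unit_irrats_def gauss_map_def)
qed

lemma funpow_gauss_map_unit_irrats: "x \<in> unit_irrats \<Longrightarrow> (gauss_map ^^ n) x \<in> unit_irrats"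
  by (induction n) (auto simp: gauss_map_unit_irrats)

lemma cf_quot_ge_1:
  assumes "x \<in> unit_irrats" "1 \<le> l"
  shows "1 \<le> cf_quot x l"
proof -
  obtain k where "l = Suc k" using assms(2) by (cases l) auto
  then show ?thesis using funpow_gauss_map_unit_irrats[OF assms(1), of k] assms(1)
    by (simp add: cf_quot_Suc unit_irrats_def le_floor_iff)
qed

lemma cf_quot_frac: "1 \<le> l \<Longrightarrow> cf_quot (frac \<alpha>) l = cf_quot \<alpha> l"
  by (simp add: cf_quot_def)

lemma sum_list_cf_digits: "sum_list (cf_digits n x) = (\<Sum>l=1..n. nat (cf_quot x l))"
  by (simp add: cf_digits_def interv_sum_list_conv_sum_set_nat atLeastLessThanSuc_atLeastAtMost del: upt_Suc)

lemma cf_digits_pos: "x \<in> unit_irrats \<Longrightarrow> 0 \<notin> set (cf_digits n x)"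
  using cf_quot_ge_1[of x] by (fastforce simp: cf_digits_def)

lemma cf_map_cf_digits:
  assumes "x \<in> unit_irrats"
  shows "x = cf_map (cf_digits n x) ((gauss_map ^^ n) x)"
proof (induction n)
  case (Suc n)
  define y where "y = (gauss_map ^^ n) x"
  have y: "y \<in> {0<..<1}"
    using funpow_gauss_map_unit_irrats[OF assms] by (auto simp: y_def unit_irrats_def)
  define a where "a = nat \<lfloor>1 / y\<rfloor>"
  have "1 \<le> \<lfloor>1 / y\<rfloor>" using y by (simp add: le_floor_iff)
  then have "y = 1 / (real a + gauss_map y)" using y by (simp add: a_def gauss_map_def frac_def)
  moreover have "cf_digits (Suc n) x = cf_digits n x @ [a]"
    using assms by (simp add: cf_digits_def cf_quot_Suc a_def y_def unit_irrats_def)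
  ultimately show ?case using Suc by (simp add: cf_map_append y_def)
qed (simp add: cf_digits_def)

section \<open>Cylinder sets\<close>

definition words :: "nat \<Rightarrow> nat list set" where
  "words n = {u. length u = n \<and> 0 \<notin> set u}"

definition cyl :: "nat \<Rightarrow> (nat list \<Rightarrow> bool) \<Rightarrow> real set" where
  "cyl n P = {x \<in> unit_irrats. P (cf_digits n x)}"

definition cyl_measure :: "nat \<Rightarrow> (nat list \<Rightarrow> bool) \<Rightarrow> real" where
  "cyl_measure n P = measure lborel (cyl n P)"

lemma cf_digits_in_words: "x \<in> unit_irrats \<Longrightarrow> cf_digits n x \<in> words n"
  by (simp add: words_def cf_digits_pos)

lemma unit_irrats_sets [measurable]: "unit_irrats \<in> sets borel"
  by (simp add: unit_irrats_def)

lemma emeasure_unit_irrats: "emeasure lborel unit_irrats = 1"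
proof -
  have "emeasure lborel unit_irrats = emeasure lborel {0<..<1::real}"
    unfolding unit_irrats_def
    by (rule emeasure_Diff_null_set[OF countable_imp_null_set_lborel[OF countable_rat]]) auto
  then show ?thesis by simp
qed

lemma emeasure_unit_irrats_diff_finite: "emeasure lborel (unit_irrats - U) \<noteq> top"
  using emeasure_mono[of "unit_irrats - U" unit_irrats lborel] emeasure_unit_irrats
  by (auto simp: top_unique)

lemma cf_digits_cyl_interval: "0 \<notin> set u \<Longrightarrow> x \<in> cyl_interval u \<Longrightarrow> cf_digits (length u) x = u"
  by (auto simp: cyl_interval_def cf_digits_cf_map)

lemma cyl_eq_UN_cyl_interval: "cyl n P = (\<Union>u\<in>{u\<in>words n. P u}. cyl_interval u \<inter> unit_irrats)"
proof (intro equalityI subsetI)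
  fix x assume x: "x \<in> cyl n P"
  then have xI: "x \<in> unit_irrats" by (simp add: cyl_def)
  have "(gauss_map ^^ n) x \<in> {0<..<1}"
    using funpow_gauss_map_unit_irrats[OF xI] by (auto simp: unit_irrats_def)
  then have "x \<in> cyl_interval (cf_digits n x)"
    unfolding cyl_interval_def by (subst cf_map_cf_digits[OF xI, of n]) auto
  then show "x \<in> (\<Union>u\<in>{u\<in>words n. P u}. cyl_interval u \<inter> unit_irrats)"
    using x xI cf_digits_in_words[OF xI] by (auto simp: cyl_def)
next
  fix x assume "x \<in> (\<Union>u\<in>{u\<in>words n. P u}. cyl_interval u \<inter> unit_irrats)"
  then obtain u where u: "u \<in> words n" "P u" "x \<in> cyl_interval u" "x \<in> unit_irrats" by auto
  then have "cf_digits n x = u" using cf_digits_cyl_interval by (auto simp: words_def)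
  then show "x \<in> cyl n P" using u by (simp add: cyl_def)
qed

lemma cyl_sets [measurable]: "cyl n P \<in> sets borel"
  unfolding cyl_eq_UN_cyl_interval by (intro sets.countable_UN') (auto simp: words_def)

lemma emeasure_cyl_interval_irrats:
  "0 \<notin> set u \<Longrightarrow> emeasure lborel (cyl_interval u \<inter> unit_irrats) = cyl_length u"
proof -
  assume u: "0 \<notin> set u"
  have "cyl_interval u \<inter> unit_irrats = cyl_interval u - \<rat>"
    using cf_map_mem_Ioo[OF u] by (auto simp: cyl_interval_def unit_irrats_def)
  then show ?thesis
    using emeasure_Diff_null_set[OF countable_imp_null_set_lborel[OF countable_rat] cyl_interval_sets[OF u]]
      emeasure_cyl_interval[OF u] by simp
qed

lemma emeasure_cyl:
  "emeasure lborel (cyl n P) = (\<integral>\<^sup>+u. ennreal (cyl_length u) \<partial>count_space {u\<in>words n. P u})"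
proof -
  have "disjoint_family_on (\<lambda>u. cyl_interval u \<inter> unit_irrats) {u\<in>words n. P u}"
    unfolding disjoint_family_on_def
  proof (intro ballI impI)
    fix u v assume "u \<in> {u\<in>words n. P u}" "v \<in> {u\<in>words n. P u}" "u \<noteq> v"
    then show "cyl_interval u \<inter> unit_irrats \<inter> (cyl_interval v \<inter> unit_irrats) = {}"
      using cf_digits_cyl_interval[of u] cf_digits_cyl_interval[of v] by (auto simp: words_def) metis
  qed
  then have "emeasure lborel (cyl n P)
      = (\<integral>\<^sup>+u. emeasure lborel (cyl_interval u \<inter> unit_irrats) \<partial>count_space {u\<in>words n. P u})"
    unfolding cyl_eq_UN_cyl_interval by (intro emeasure_UN_countable) (auto simp: words_def)
  also have "\<dots> = (\<integral>\<^sup>+u. ennreal (cyl_length u) \<partial>count_space {u\<in>words n. P u})"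
    by (intro nn_integral_cong) (auto simp: emeasure_cyl_interval_irrats words_def)
  finally show ?thesis .
qed

lemma emeasure_cyl_append:
  "emeasure lborel (cyl (m + k) (\<lambda>w. P (take m w) \<and> R (drop m w)))
     = (\<integral>\<^sup>+s. (\<integral>\<^sup>+t. ennreal (cyl_length (s @ t)) \<partial>count_space {t\<in>words k. R t})
          \<partial>count_space {s\<in>words m. P s})"
proof -
  define Z where "Z s = cyl (m + k) (\<lambda>w. take m w = s \<and> R (drop m w))" for s
  have split: "cyl (m + k) (\<lambda>w. P (take m w) \<and> R (drop m w)) = (\<Union>s\<in>{s\<in>words m. P s}. Z s)"
    using cf_digits_in_words take_cf_digits[of m "m + k"] by (auto simp: cyl_def Z_def)
  have "emeasure lborel (cyl (m + k) (\<lambda>w. P (take m w) \<and> R (drop m w)))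
      = (\<integral>\<^sup>+s. emeasure lborel (Z s) \<partial>count_space {s\<in>words m. P s})"
    unfolding split
    by (rule emeasure_UN_countable) (simp_all add: Z_def, auto simp: Z_def disjoint_family_on_def cyl_def)
  also have "\<dots> = (\<integral>\<^sup>+s. (\<integral>\<^sup>+t. ennreal (cyl_length (s @ t)) \<partial>count_space {t\<in>words k. R t})
          \<partial>count_space {s\<in>words m. P s})"
  proof (intro nn_integral_cong)
    fix s assume "s \<in> space (count_space {s\<in>words m. P s})"
    then have s: "s \<in> words m" by simp
    have "bij_betw (\<lambda>t. s @ t) {t\<in>words k. R t} {w\<in>words (m + k). take m w = s \<and> R (drop m w)}"
    proof (rule bij_betwI')
      fix w assume w: "w \<in> {w\<in>words (m + k). take m w = s \<and> R (drop m w)}"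
      then have "w = s @ drop m w" by (metis (mono_tags, lifting) append_take_drop_id mem_Collect_eq)
      moreover have "drop m w \<in> {t\<in>words k. R t}" using w by (auto simp: words_def dest: in_set_dropD)
      ultimately show "\<exists>t\<in>{t\<in>words k. R t}. w = s @ t" by blast
    qed (use s in \<open>auto simp: words_def\<close>)
    then show "emeasure lborel (Z s) = (\<integral>\<^sup>+t. ennreal (cyl_length (s @ t)) \<partial>count_space {t\<in>words k. R t})"
      unfolding Z_def emeasure_cyl by (rule nn_integral_bij_count_space[symmetric])
  qed
  finally show ?thesis .
qed

lemma emeasure_cyl_eq: "emeasure lborel (cyl n P) = ennreal (cyl_measure n P)"
proof -
  have "emeasure lborel (cyl n P) \<le> emeasure lborel unit_irrats"
    by (rule emeasure_mono) (auto simp: cyl_def)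
  then show ?thesis unfolding cyl_measure_def using emeasure_unit_irrats
    by (intro emeasure_eq_ennreal_measure) (auto simp: top_unique)
qed

lemma cyl_measure_nonneg: "0 \<le> cyl_measure n P"
  by (simp add: cyl_measure_def)

lemma cyl_fmeasurable: "cyl n P \<in> fmeasurable lborel"
  by (intro fmeasurableI) (auto simp: emeasure_cyl_eq)

lemma cyl_Int_cyl: "m \<le> n \<Longrightarrow> cyl m P \<inter> cyl n Q = cyl n (\<lambda>u. P (take m u) \<and> Q u)"
  by (auto simp: cyl_def take_cf_digits)

lemma cyl_measure_append_le:
  "cyl_measure (m + k) (\<lambda>w. P (take m w) \<and> R (drop m w)) \<le> 4 * cyl_measure m P * cyl_measure k R"
proof -
  let ?S = "count_space {s\<in>words m. P s}" and ?T = "count_space {t\<in>words k. R t}"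
  have "ennreal (cyl_measure (m + k) (\<lambda>w. P (take m w) \<and> R (drop m w)))
      = (\<integral>\<^sup>+s. (\<integral>\<^sup>+t. ennreal (cyl_length (s @ t)) \<partial>?T) \<partial>?S)"
    by (simp add: emeasure_cyl_append flip: emeasure_cyl_eq)
  also have "\<dots> \<le> (\<integral>\<^sup>+s. (\<integral>\<^sup>+t. ennreal (cyl_length s) * (4 * ennreal (cyl_length t)) \<partial>?T) \<partial>?S)"
  proof (intro nn_integral_mono)
    fix s t assume "s \<in> space ?S" "t \<in> space ?T"
    then have "0 \<notin> set s" "0 \<notin> set t" by (auto simp: words_def)
    then have "ennreal (cyl_length (s @ t)) \<le> ennreal (cyl_length s * (4 * cyl_length t))"
      using cyl_length_append(1) by (intro ennreal_leI) (simp add: mult_ac)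
    also have "\<dots> = ennreal (cyl_length s) * (4 * ennreal (cyl_length t))"
      using cyl_length_pos \<open>0 \<notin> set s\<close> \<open>0 \<notin> set t\<close> by (simp add: ennreal_mult less_imp_le)
    finally show "ennreal (cyl_length (s @ t)) \<le> ennreal (cyl_length s) * (4 * ennreal (cyl_length t))" .
  qed
  also have "\<dots> = ennreal (cyl_measure m P) * (4 * ennreal (cyl_measure k R))"
    by (simp add: nn_integral_cmult nn_integral_multc emeasure_cyl flip: emeasure_cyl_eq)
  also have "\<dots> = ennreal (4 * cyl_measure m P * cyl_measure k R)"
    by (simp add: ennreal_mult cyl_measure_nonneg mult_ac)
  finally show ?thesis by (simp add: cyl_measure_nonneg)
qed

lemma cyl_measure_mult_le:
  "cyl_measure m P * cyl_measure k R \<le> 8 * cyl_measure (m + k) (\<lambda>w. P (take m w) \<and> R (drop m w))"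
proof -
  let ?S = "count_space {s\<in>words m. P s}" and ?T = "count_space {t\<in>words k. R t}"
  have "ennreal (cyl_measure m P * cyl_measure k R)
      = (\<integral>\<^sup>+s. (\<integral>\<^sup>+t. ennreal (cyl_length s) * ennreal (cyl_length t) \<partial>?T) \<partial>?S)"
    by (simp add: nn_integral_multc nn_integral_cmult ennreal_mult cyl_measure_nonneg emeasure_cyl
        flip: emeasure_cyl_eq)
  also have "\<dots> \<le> (\<integral>\<^sup>+s. (\<integral>\<^sup>+t. 8 * ennreal (cyl_length (s @ t)) \<partial>?T) \<partial>?S)"
  proof (intro nn_integral_mono)
    fix s t assume "s \<in> space ?S" "t \<in> space ?T"
    then have "0 \<notin> set s" "0 \<notin> set t" by (auto simp: words_def)
    then have "ennreal (cyl_length s) * ennreal (cyl_length t) = ennreal (cyl_length s * cyl_length t)"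
      using cyl_length_pos by (simp add: ennreal_mult less_imp_le)
    also have "\<dots> \<le> ennreal (8 * cyl_length (s @ t))"
      using cyl_length_append(2) \<open>0 \<notin> set s\<close> \<open>0 \<notin> set t\<close> by (intro ennreal_leI) simp
    finally show "ennreal (cyl_length s) * ennreal (cyl_length t) \<le> 8 * ennreal (cyl_length (s @ t))"
      using cyl_length_pos[of "s @ t"] \<open>0 \<notin> set s\<close> \<open>0 \<notin> set t\<close> by (simp add: ennreal_mult)
  qed
  also have "\<dots> = ennreal (8 * cyl_measure (m + k) (\<lambda>w. P (take m w) \<and> R (drop m w)))"
    by (simp add: nn_integral_cmult emeasure_cyl_append ennreal_mult cyl_measure_nonneg
        flip: emeasure_cyl_eq)
  finally show ?thesis by (simp add: cyl_measure_nonneg)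
qed

lemma words_nth_pos: "v \<in> words n \<Longrightarrow> l < n \<Longrightarrow> 0 < v ! l"
  by (auto simp: words_def intro!: gr0I) (metis nth_mem)

lemma cyl_measure_cong: "(\<And>u. u \<in> words n \<Longrightarrow> P u = P' u) \<Longrightarrow> cyl_measure n P = cyl_measure n P'"
  unfolding cyl_measure_def cyl_def by (metis (mono_tags) cf_digits_in_words)

lemma cyl_measure_mono: "(\<And>u. u \<in> words n \<Longrightarrow> P u \<Longrightarrow> P' u) \<Longrightarrow> cyl_measure n P \<le> cyl_measure n P'"
proof -
  assume "\<And>u. u \<in> words n \<Longrightarrow> P u \<Longrightarrow> P' u"
  then have "cyl n P \<subseteq> cyl n P'" by (auto simp: cyl_def cf_digits_in_words)
  then show ?thesis unfolding cyl_measure_def by (rule measure_mono_fmeasurable) (simp_all add: cyl_fmeasurable)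
qed

lemma cyl_measure_take: "m \<le> n \<Longrightarrow> cyl_measure n (\<lambda>u. P (take m u)) = cyl_measure m P"
  by (simp add: cyl_measure_def cyl_def take_cf_digits)

lemma cyl_measure_True: "cyl_measure n (\<lambda>_. True) = 1"
  using emeasure_unit_irrats by (simp add: cyl_measure_def cyl_def measure_def)

lemma cyl_measure_eq_word: "w \<in> words n \<Longrightarrow> cyl_measure n (\<lambda>u. u = w) = cyl_length w"
proof -
  assume w: "w \<in> words n"
  then have "{u \<in> words n. u = w} = {w}" by auto
  then have "ennreal (cyl_measure n (\<lambda>u. u = w)) = ennreal (cyl_length w)"
    by (simp add: emeasure_cyl nn_integral_count_space_finite flip: emeasure_cyl_eq)
  then show ?thesis using cyl_length_pos[of w] w cyl_measure_nonneg
    by (simp add: words_def ennreal_inj)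
qed

lemma cyl_measure_disj_le: "cyl_measure n (\<lambda>u. P u \<or> Q u) \<le> cyl_measure n P + cyl_measure n Q"
proof -
  have "cyl n (\<lambda>u. P u \<or> Q u) = cyl n P \<union> cyl n Q" by (auto simp: cyl_def)
  then show ?thesis unfolding cyl_measure_def by (simp add: measure_Un_le)
qed

lemma cyl_measure_bex_le:
  "finite I \<Longrightarrow> cyl_measure n (\<lambda>u. \<exists>i\<in>I. P i u) \<le> (\<Sum>i\<in>I. cyl_measure n (P i))"
proof -
  assume I: "finite I"
  have eq: "cyl n (\<lambda>u. \<exists>i\<in>I. P i u) = (\<Union>i\<in>I. cyl n (P i))" by (auto simp: cyl_def)
  show ?thesis unfolding cyl_measure_def eq by (rule measure_UNION_le[OF I]) simp
qed

lemma cyl_measure_diff: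
  "cyl_measure n (\<lambda>u. P u \<and> \<not> Q u) = cyl_measure n P - cyl_measure n (\<lambda>u. P u \<and> Q u)"
proof -
  have "cyl n (\<lambda>u. P u \<and> \<not> Q u) = cyl n P - cyl n (\<lambda>u. P u \<and> Q u)" by (auto simp: cyl_def)
  moreover have "cyl n (\<lambda>u. P u \<and> Q u) \<subseteq> cyl n P" by (auto simp: cyl_def)
  ultimately show ?thesis
    unfolding cyl_measure_def by (simp add: measure_Diff emeasure_cyl_eq)
qed

lemma cyl_first_digit: "cyl 1 (\<lambda>v. Q (v ! 0)) = {x \<in> unit_irrats. Q (nat \<lfloor>1 / x\<rfloor>)}"
  by (auto simp: cyl_def cf_digits_def cf_quot_Suc[of _ 0] unit_irrats_def)

lemma cyl_measure_first_digit_gt_le: "cyl_measure 1 (\<lambda>v. M < v ! 0) \<le> 1 / (real M + 1)"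
proof -
  have "{x \<in> unit_irrats. M < nat \<lfloor>1 / x\<rfloor>} \<subseteq> {0<..1 / (real M + 1)}"
  proof
    fix x assume x: "x \<in> {x \<in> unit_irrats. M < nat \<lfloor>1 / x\<rfloor>}"
    then have "0 < x" by (auto simp: unit_irrats_def)
    moreover have "int M + 1 \<le> \<lfloor>1 / x\<rfloor>" using x by auto
    then have "real M + 1 \<le> 1 / x" by (simp add: le_floor_iff)
    ultimately show "x \<in> {0<..1 / (real M + 1)}" by (simp add: field_simps)
  qed
  then have "measure lborel {x \<in> unit_irrats. M < nat \<lfloor>1 / x\<rfloor>} \<le> measure lborel {0<..1 / (real M + 1)}"
    using cyl_sets[of 1 "\<lambda>v. M < v ! 0"] cyl_first_digit[of "\<lambda>j. M < j"]
    by (intro measure_mono_fmeasurable) (auto intro: fmeasurable_Ioc)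
  then show ?thesis unfolding cyl_measure_def cyl_first_digit[of "\<lambda>j. M < j"] by simp
qed

lemma cyl_measure_first_digit_eq_le:
  assumes "1 \<le> k"
  shows "cyl_measure 1 (\<lambda>v. v ! 0 = k) \<le> 1 / (real k * (real k + 1))"
proof -
  have "{x \<in> unit_irrats. nat \<lfloor>1 / x\<rfloor> = k} \<subseteq> {1 / (real k + 1)<..1 / real k}"
  proof
    fix x assume x: "x \<in> {x \<in> unit_irrats. nat \<lfloor>1 / x\<rfloor> = k}"
    then have "0 < x" "\<lfloor>1 / x\<rfloor> = int k" using assms by (auto simp: unit_irrats_def)
    moreover have "real k \<le> 1 / x" "1 / x < real k + 1" using \<open>\<lfloor>1 / x\<rfloor> = int k\<close> by linarith+
    ultimately show "x \<in> {1 / (real k + 1)<..1 / real k}" using assms by (auto simp: field_simps)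
  qed
  then have "measure lborel {x \<in> unit_irrats. nat \<lfloor>1 / x\<rfloor> = k}
      \<le> measure lborel {1 / (real k + 1)<..1 / real k}"
    using cyl_sets[of 1 "\<lambda>v. v ! 0 = k"] cyl_first_digit[of "\<lambda>j. j = k"]
    by (intro measure_mono_fmeasurable) (auto intro: fmeasurable_Ioc)
  also have "\<dots> = 1 / (real k * (real k + 1))" using assms by (simp add: frac_le field_simps)
  finally show ?thesis unfolding cyl_measure_def cyl_first_digit[of "\<lambda>j. j = k"] .
qed

lemma cyl_measure_first_digit_between_ge:
  assumes "1 \<le> lo" "lo \<le> hi"
  shows "1 / real lo - 1 / (real hi + 1) \<le> cyl_measure 1 (\<lambda>v. lo \<le> v ! 0 \<and> v ! 0 \<le> hi)"
proof -
  have "{1 / (real hi + 1)<..<1 / real lo} - \<rat> \<subseteq> {x \<in> unit_irrats. lo \<le> nat \<lfloor>1 / x\<rfloor> \<and> nat \<lfloor>1 / x\<rfloor> \<le> hi}"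
  proof
    fix x assume x: "x \<in> {1 / (real hi + 1)<..<1 / real lo} - \<rat>"
    have x0: "0 < x" using x by (auto intro: less_trans[rotated])
    have "real lo < 1 / x" "1 / x < real hi + 1" using x x0 assms by (auto simp: field_simps)
    then have "lo \<le> nat \<lfloor>1 / x\<rfloor>" "nat \<lfloor>1 / x\<rfloor> \<le> hi" by linarith+
    moreover have "x * real lo < 1" "x \<le> x * real lo" using x x0 assms by (auto simp: field_simps)
    then have "x < 1" by linarith
    ultimately show "x \<in> {x \<in> unit_irrats. lo \<le> nat \<lfloor>1 / x\<rfloor> \<and> nat \<lfloor>1 / x\<rfloor> \<le> hi}"
      using x x0 by (simp add: unit_irrats_def)
  qed
  then have "measure lborel ({1 / (real hi + 1)<..<1 / real lo} - \<rat>)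
      \<le> measure lborel {x \<in> unit_irrats. lo \<le> nat \<lfloor>1 / x\<rfloor> \<and> nat \<lfloor>1 / x\<rfloor> \<le> hi}"
    using cyl_fmeasurable[of 1 "\<lambda>v. lo \<le> v ! 0 \<and> v ! 0 \<le> hi"] cyl_first_digit[of "\<lambda>j. lo \<le> j \<and> j \<le> hi"]
    by (intro measure_mono_fmeasurable) auto
  moreover have "measure lborel ({1 / (real hi + 1)<..<1 / real lo} - \<rat>) = 1 / real lo - 1 / (real hi + 1)"
    using assms unfolding measure_def
    by (subst emeasure_Diff_null_set[OF countable_imp_null_set_lborel[OF countable_rat]]) (auto simp: frac_le)
  ultimately show ?thesis unfolding cyl_measure_def cyl_first_digit[of "\<lambda>j. lo \<le> j \<and> j \<le> hi"] by simp
qed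

lemma cyl_measure_digit_le: "l < n \<Longrightarrow> cyl_measure n (\<lambda>v. Q (v ! l)) \<le> 4 * cyl_measure 1 (\<lambda>v. Q (v ! 0))"
proof -
  assume l: "l < n"
  have "cyl_measure n (\<lambda>v. Q (v ! l)) = cyl_measure n (\<lambda>v. Q (take (l + 1) v ! l))"
    by (intro cyl_measure_cong) (auto simp: words_def l)
  also have "\<dots> = cyl_measure (l + 1) (\<lambda>w. True \<and> Q (drop l w ! 0))"
    using l by (subst cyl_measure_take) (auto intro: cyl_measure_cong simp: words_def)
  also have "\<dots> \<le> 4 * cyl_measure l (\<lambda>_. True) * cyl_measure 1 (\<lambda>z. Q (z ! 0))"
    by (rule cyl_measure_append_le)
  finally show ?thesis by (simp add: cyl_measure_True)
qed

section \<open>Large digit sums are rare\<close>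

lemma cyl_measure_markov:
  assumes I: "finite I" and t: "0 \<le> t" and c: "\<And>i. i \<in> I \<Longrightarrow> 0 \<le> c i"
    and H: "\<And>u. u \<in> words L \<Longrightarrow> Q u \<Longrightarrow> t \<le> (\<Sum>i\<in>I. if A i u then c i else 0)"
  shows "t * cyl_measure L Q \<le> (\<Sum>i\<in>I. c i * cyl_measure L (A i))"
proof -
  have pointwise: "ennreal t * indicator (cyl L Q) x \<le> (\<Sum>i\<in>I. ennreal (c i) * indicator (cyl L (A i)) x)"
    for x
  proof (cases "x \<in> cyl L Q")
    case True
    then have x: "x \<in> unit_irrats" "Q (cf_digits L x)" by (auto simp: cyl_def)
    have "ennreal t \<le> ennreal (\<Sum>i\<in>I. if A i (cf_digits L x) then c i else 0)"
      using H[OF cf_digits_in_words[OF x(1)] x(2)] by (rule ennreal_leI)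
    also have "\<dots> = (\<Sum>i\<in>I. ennreal (if A i (cf_digits L x) then c i else 0))"
      using c by (intro sum_ennreal[symmetric]) auto
    also have "\<dots> = (\<Sum>i\<in>I. ennreal (c i) * indicator (cyl L (A i)) x)"
      using x(1) by (intro sum.cong) (auto simp: cyl_def)
    finally show ?thesis using True by simp
  qed simp
  have "ennreal (t * cyl_measure L Q) = (\<integral>\<^sup>+x. ennreal t * indicator (cyl L Q) x \<partial>lborel)"
    by (simp add: t ennreal_mult' nn_integral_cmult_indicator emeasure_cyl_eq)
  also have "\<dots> \<le> (\<integral>\<^sup>+x. (\<Sum>i\<in>I. ennreal (c i) * indicator (cyl L (A i)) x) \<partial>lborel)"
    by (intro nn_integral_mono pointwise)
  also have "\<dots> = (\<Sum>i\<in>I. ennreal (c i * cyl_measure L (A i)))"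
    using c by (simp add: nn_integral_sum nn_integral_cmult_indicator emeasure_cyl_eq ennreal_mult
        cyl_measure_nonneg)
  also have "\<dots> = ennreal (\<Sum>i\<in>I. c i * cyl_measure L (A i))"
    using c by (intro sum_ennreal) (simp add: cyl_measure_nonneg)
  finally show ?thesis using c by (simp add: sum_nonneg cyl_measure_nonneg)
qed

lemma markov_truncated_digit_sum:
  assumes t: "0 < t"
  shows "t * cyl_measure L (\<lambda>v. t < (\<Sum>l<L. if v ! l \<le> M then real (v ! l) else 0))
           \<le> 4 * real L * ln (real M + 1)"
proof -
  have "t * cyl_measure L (\<lambda>v. t < (\<Sum>l<L. if v ! l \<le> M then real (v ! l) else 0))
      \<le> (\<Sum>i\<in>{..<L} \<times> {1..M}. real (snd i) * cyl_measure L (\<lambda>v. v ! fst i = snd i))"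
  proof (rule cyl_measure_markov)
    fix v assume v: "v \<in> words L" and tv: "t < (\<Sum>l<L. if v ! l \<le> M then real (v ! l) else 0)"
    have "(\<Sum>l<L. if v ! l \<le> M then real (v ! l) else 0) = (\<Sum>l<L. \<Sum>k\<in>{1..M}. if v ! l = k then real k else 0)"
    proof (intro sum.cong refl)
      fix l assume "l \<in> {..<L}"
      then have "1 \<le> v ! l" using words_nth_pos[OF v] by (simp add: Suc_le_eq)
      then show "(if v ! l \<le> M then real (v ! l) else 0) = (\<Sum>k\<in>{1..M}. if v ! l = k then real k else 0)"
        by (simp add: sum.delta')
    qed
    also have "\<dots> = (\<Sum>i\<in>{..<L} \<times> {1..M}. if v ! fst i = snd i then real (snd i) else 0)"
      by (subst sum.cartesian_product) (simp add: case_prod_beta)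
    finally show "t \<le> (\<Sum>i\<in>{..<L} \<times> {1..M}. if v ! fst i = snd i then real (snd i) else 0)"
      using tv by simp
  qed (use t in auto)
  also have "\<dots> \<le> (\<Sum>i\<in>{..<L} \<times> {1..M}. 4 / (real (snd i) + 1))"
  proof (intro sum_mono)
    fix i assume "i \<in> {..<L} \<times> {1..M}"
    then have l: "fst i < L" and k: "1 \<le> snd i" by auto
    have "cyl_measure L (\<lambda>v. v ! fst i = snd i) \<le> 4 * (1 / (real (snd i) * (real (snd i) + 1)))"
      using cyl_measure_digit_le[OF l, of "\<lambda>j. j = snd i"] cyl_measure_first_digit_eq_le[OF k] by simp
    then have "real (snd i) * cyl_measure L (\<lambda>v. v ! fst i = snd i)
        \<le> real (snd i) * (4 * (1 / (real (snd i) * (real (snd i) + 1))))"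
      by (intro mult_left_mono) auto
    also have "real (snd i) * (4 * (1 / (real (snd i) * (real (snd i) + 1)))) = 4 / (real (snd i) + 1)"
      using k by simp
    finally show "real (snd i) * cyl_measure L (\<lambda>v. v ! fst i = snd i) \<le> 4 / (real (snd i) + 1)" .
  qed
  also have "\<dots> = (\<Sum>l<L. \<Sum>k=1..M. 4 / (real k + 1))"
    by (subst sum.cartesian_product) (simp add: case_prod_beta)
  also have "\<dots> = real L * (4 * (\<Sum>k=1..M. 1 / (real k + 1)))"
    by (simp add: sum_distrib_left)
  also have "\<dots> \<le> 4 * real L * ln (real M + 1)"
    using sum_inverse_Suc_le_ln[of M] by (simp add: mult_left_mono)
  finally show ?thesis .
qed

text \<open>Digits above M are handled by a union bound, the digit sum truncated at M by Markov's
  inequality, as its mean is of order L log M.\<close>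
lemma cyl_measure_digit_sum_gt_le:
  assumes t: "0 < t"
  shows "cyl_measure L (\<lambda>v. t < real (sum_list v))
           \<le> 4 * real L / (real M + 1) + 4 * real L * ln (real M + 1) / t"
proof -
  define F where "F v = (\<Sum>l<L. if v ! l \<le> M then real (v ! l) else 0)" for v
  have "cyl_measure L (\<lambda>v. t < real (sum_list v)) \<le> cyl_measure L (\<lambda>v. (\<exists>l\<in>{..<L}. M < v ! l) \<or> t < F v)"
  proof (rule cyl_measure_mono)
    fix v assume v: "v \<in> words L" and s: "t < real (sum_list v)"
    have "real (sum_list v) = (\<Sum>l<L. real (v ! l))"
      using v by (simp add: sum_list_sum_nth words_def atLeast0LessThan)
    then show "(\<exists>l\<in>{..<L}. M < v ! l) \<or> t < F v"
      using s by (cases "\<exists>l\<in>{..<L}. M < v ! l") (auto simp: F_def not_less intro: sum.cong)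
  qed
  also have "\<dots> \<le> cyl_measure L (\<lambda>v. \<exists>l\<in>{..<L}. M < v ! l) + cyl_measure L (\<lambda>v. t < F v)"
    by (rule cyl_measure_disj_le)
  also have "cyl_measure L (\<lambda>v. \<exists>l\<in>{..<L}. M < v ! l) \<le> (\<Sum>l<L. cyl_measure L (\<lambda>v. M < v ! l))"
    by (rule cyl_measure_bex_le) simp
  also have "(\<Sum>l<L. cyl_measure L (\<lambda>v. M < v ! l)) \<le> (\<Sum>l<L. 4 / (real M + 1))"
    using cyl_measure_digit_le[of _ L "\<lambda>j. M < j"] cyl_measure_first_digit_gt_le[of M]
    by (intro sum_mono) fastforce
  also have "cyl_measure L (\<lambda>v. t < F v) \<le> 4 * real L * ln (real M + 1) / t"
    using markov_truncated_digit_sum[OF t, of L M] t by (simp add: F_def field_simps)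
  finally show ?thesis by (simp add: mult.commute)
qed

lemma cyl_measure_digit_sum_large_le:
  assumes "L < K" "64 \<le> K"
  shows "cyl_measure L (\<lambda>v. 128 * real K * ln (real K) < real (sum_list v)) \<le> 1 / 8"
proof -
  have lnK: "1 \<le> ln (real K)" using assms(2) by (intro ln_ge_1) simp
  have K2: "real (K\<^sup>2 - 1) + 1 = real K ^ 2" using assms(2) by (simp add: of_nat_diff)
  have "cyl_measure L (\<lambda>v. 128 * real K * ln (real K) < real (sum_list v))
      \<le> 4 * real L / real K ^ 2 + 4 * real L * (2 * ln (real K)) / (128 * real K * ln (real K))"
    using cyl_measure_digit_sum_gt_le[of "128 * real K * ln (real K)" L "K\<^sup>2 - 1"] lnK assms
    by (simp add: K2 ln_realpow)
  also have "\<dots> \<le> 4 * real K / real K ^ 2 + 4 * real K * (2 * ln (real K)) / (128 * real K * ln (real K))"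
    using assms lnK by (intro add_mono divide_right_mono mult_right_mono) auto
  also have "\<dots> = 4 / real K + 1 / 16" using assms lnK by (simp add: power2_eq_square)
  also have "\<dots> \<le> 1 / 8" using assms by (simp add: field_simps)
  finally show ?thesis .
qed

definition target_digits :: "(real \<Rightarrow> real) \<Rightarrow> nat \<Rightarrow> nat set" where
  "target_digits \<psi> K = {k. \<psi> (real K) < real k \<and> real k < real K ^ 2}"

definition target_prob :: "(real \<Rightarrow> real) \<Rightarrow> nat \<Rightarrow> real" where
  "target_prob \<psi> K = cyl_measure 1 (\<lambda>v. v ! 0 \<in> target_digits \<psi> K)"

text \<open>Digit lists start with a_1, so u ! (K - 1) is a_K. The constant 256 is the C of the theorem.\<close>
definition good_word :: "(real \<Rightarrow> real) \<Rightarrow> nat \<Rightarrow> nat list \<Rightarrow> bool" where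
  "good_word \<psi> K u \<longleftrightarrow>
     real (sum_list (take (K - 1) u)) \<le> 256 * real K * ln (real K) \<and> u ! (K - 1) \<in> target_digits \<psi> K"

lemma target_prob_nonneg: "0 \<le> target_prob \<psi> K"
  by (simp add: target_prob_def cyl_measure_nonneg)

lemma cyl_measure_target_digit_le:
  "l < n \<Longrightarrow> cyl_measure n (\<lambda>v. v ! l \<in> target_digits \<psi> K) \<le> 4 * target_prob \<psi> K"
  unfolding target_prob_def by (rule cyl_measure_digit_le)

lemma cyl_measure_prefix_good_word_ge:
  assumes w: "w \<in> words n" and nK: "n < K" and K: "64 \<le> K"
    and sw: "real (sum_list w) \<le> 128 * real K * ln (real K)"
  shows "cyl_length w * target_prob \<psi> K / 16 \<le> cyl_measure K (\<lambda>u. take n u = w \<and> good_word \<psi> K u)"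
proof -
  define B where "B = 128 * real K * ln (real K)"
  define P where "P v \<longleftrightarrow> take n v = w \<and> real (sum_list v) \<le> 2 * B" for v
  have KK: "K - 1 + 1 = K" using nK by simp
  have "cyl_measure K (\<lambda>u. take n u = w \<and> good_word \<psi> K u)
      = cyl_measure (K - 1 + 1) (\<lambda>u. P (take (K - 1) u) \<and> drop (K - 1) u ! 0 \<in> target_digits \<psi> K)"
    unfolding KK using nK
    by (intro cyl_measure_cong) (auto simp: P_def good_word_def B_def words_def min_def)
  then have split: "cyl_measure (K - 1) P * target_prob \<psi> K \<le> 8 * cyl_measure K (\<lambda>u. take n u = w \<and> good_word \<psi> K u)"
    using cyl_measure_mult_le[of "K - 1" P 1] by (simp add: target_prob_def)
  have nn: "n + (K - 1 - n) = K - 1" using nK by simp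
  have "cyl_measure (K - 1) (\<lambda>v. take n v = w \<and> 2 * B < real (sum_list v))
      \<le> cyl_measure (n + (K - 1 - n)) (\<lambda>v. take n v = w \<and> B < real (sum_list (drop n v)))"
  proof (unfold nn, intro cyl_measure_mono)
    fix v assume v: "take n v = w \<and> 2 * B < real (sum_list v)"
    have "sum_list v = sum_list (take n v) + sum_list (drop n v)"
      by (metis append_take_drop_id sum_list_append)
    then show "take n v = w \<and> B < real (sum_list (drop n v))" using v sw[folded B_def] by simp
  qed
  also have "\<dots> \<le> 4 * cyl_length w * cyl_measure (K - 1 - n) (\<lambda>z. B < real (sum_list z))"
    using cyl_measure_append_le[of n "K - 1 - n" "\<lambda>z. z = w"] cyl_measure_eq_word[OF w] by simp
  also have "\<dots> \<le> 4 * cyl_length w * (1 / 8)"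
    using cyl_measure_digit_sum_large_le[of "K - 1 - n" K] nK K cyl_length_pos[of w] w
    by (intro mult_left_mono) (auto simp: B_def words_def)
  finally have large: "cyl_measure (K - 1) (\<lambda>v. take n v = w \<and> 2 * B < real (sum_list v)) \<le> cyl_length w / 2"
    by simp
  have "cyl_measure (K - 1) P
      = cyl_measure (K - 1) (\<lambda>v. take n v = w) - cyl_measure (K - 1) (\<lambda>v. take n v = w \<and> 2 * B < real (sum_list v))"
    by (simp add: P_def[abs_def] not_less flip: cyl_measure_diff)
  also have "cyl_measure (K - 1) (\<lambda>v. take n v = w) = cyl_length w"
    using cyl_measure_take[of n "K - 1" "\<lambda>v. v = w"] nK cyl_measure_eq_word[OF w] by simp
  finally have "cyl_length w / 2 \<le> cyl_measure (K - 1) P" using large by linarith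
  then have "cyl_length w / 2 * target_prob \<psi> K \<le> cyl_measure (K - 1) P * target_prob \<psi> K"
    using target_prob_nonneg by (rule mult_right_mono)
  then show ?thesis using split by simp
qed

lemma cyl_measure_prefix_good_words_le:
  assumes w: "w \<in> words n" and ni: "n < i" and ij: "i < j"
  shows "cyl_measure j (\<lambda>u. take n u = w \<and> good_word \<psi> i (take i u) \<and> good_word \<psi> j u)
           \<le> 256 * cyl_length w * target_prob \<psi> i * target_prob \<psi> j"
proof -
  define Qi where "Qi y \<longleftrightarrow> y ! (i - n - 1) \<in> target_digits \<psi> i" for y
  define Qj where "Qj y \<longleftrightarrow> y ! (j - i - 1) \<in> target_digits \<psi> j" for y
  define R where "R z \<longleftrightarrow> Qi (take (i - n) z) \<and> Qj (drop (i - n) z)" for z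
  have jj: "n + (j - n) = j" and ii: "i - n + (j - i) = j - n" using ni ij by simp_all
  have "cyl_measure j (\<lambda>u. take n u = w \<and> good_word \<psi> i (take i u) \<and> good_word \<psi> j u)
      \<le> cyl_measure (n + (j - n)) (\<lambda>u. take n u = w \<and> R (drop n u))"
    using ni ij by (unfold jj, intro cyl_measure_mono) (auto simp: good_word_def R_def Qi_def Qj_def words_def)
  also have "\<dots> \<le> 4 * cyl_length w * cyl_measure (j - n) R"
    using cyl_measure_append_le[of n "j - n" "\<lambda>z. z = w" R] cyl_measure_eq_word[OF w] by simp
  also have "\<dots> \<le> 4 * cyl_length w * (4 * cyl_measure (i - n) Qi * cyl_measure (j - i) Qj)"
    using cyl_measure_append_le[of "i - n" "j - i" Qi Qj] cyl_length_pos[of w] w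
    by (intro mult_left_mono) (auto simp: ii R_def[abs_def] words_def)
  also have "\<dots> \<le> 4 * cyl_length w * (4 * (4 * target_prob \<psi> i) * (4 * target_prob \<psi> j))"
    using cyl_measure_target_digit_le[of "i - n - 1" "i - n" \<psi> i] cyl_measure_target_digit_le[of "j - i - 1" "j - i" \<psi> j]
      ni ij cyl_length_pos[of w] w cyl_measure_nonneg target_prob_nonneg
    by (intro mult_left_mono mult_mono) (auto simp: Qi_def[abs_def] Qj_def[abs_def] words_def)
  finally show ?thesis by (simp add: algebra_simps)
qed

lemma target_prob_ge:
  assumes p: "0 < \<psi> (real K)" and K: "1 \<le> K"
  shows "1 / (\<psi> (real K) + 1) - 1 / real K ^ 2 \<le> target_prob \<psi> K"
proof -
  define lo where "lo = nat \<lfloor>\<psi> (real K)\<rfloor> + 1"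
  define hi where "hi = K\<^sup>2 - 1"
  have lo: "\<psi> (real K) < real lo" "real lo \<le> \<psi> (real K) + 1" "1 \<le> lo"
    using p by (auto simp: lo_def) linarith+
  have hi: "real hi + 1 = real K ^ 2" "hi < K\<^sup>2" using K by (simp_all add: hi_def of_nat_diff)
  show ?thesis
  proof (cases "lo \<le> hi")
    case True
    have "1 / (\<psi> (real K) + 1) \<le> 1 / real lo"
      using lo p by (intro divide_left_mono) auto
    then have "1 / (\<psi> (real K) + 1) - 1 / real K ^ 2 \<le> 1 / real lo - 1 / (real hi + 1)"
      using hi by simp
    also have "\<dots> \<le> cyl_measure 1 (\<lambda>v. lo \<le> v ! 0 \<and> v ! 0 \<le> hi)"
      using True lo by (intro cyl_measure_first_digit_between_ge) auto
    also have "\<dots> \<le> target_prob \<psi> K"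
      unfolding target_prob_def using lo hi
      by (intro cyl_measure_mono) (auto simp: target_digits_def)
    finally show ?thesis .
  next
    case False
    then have "real K ^ 2 \<le> \<psi> (real K) + 1" using hi lo by linarith
    then have "1 / (\<psi> (real K) + 1) \<le> 1 / real K ^ 2" using K p by (intro divide_left_mono) auto
    then show ?thesis using target_prob_nonneg[of \<psi> K] by linarith
  qed
qed

lemma target_prob_not_summable:
  assumes pos: "\<forall>x>0. \<psi> x > 0" and ns: "\<not> summable (\<lambda>k. 1 / \<psi> (real (Suc k)))"
  shows "\<not> summable (target_prob \<psi>)"
proof
  assume "summable (target_prob \<psi>)"
  then have "summable (\<lambda>k. target_prob \<psi> (Suc k) + inverse (real (Suc k) ^ 2))"
    using inverse_power_summable[of 2, where 'a=real]
    by (intro summable_add) (simp_all add: summable_Suc_iff flip: summable_Suc_iff[of "\<lambda>n. inverse (real n ^ 2)"])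
  then have "summable (\<lambda>k. 1 / (\<psi> (real (Suc k)) + 1))"
  proof (rule summable_comparison_test'[where N = 0])
    fix k :: nat
    have "0 < \<psi> (real (Suc k))" using pos by simp
    then show "norm (1 / (\<psi> (real (Suc k)) + 1)) \<le> target_prob \<psi> (Suc k) + inverse (real (Suc k) ^ 2)"
      using target_prob_ge[of \<psi> "Suc k"] by (simp add: inverse_eq_divide)
  qed
  then show False using summable_inverse_of_summable_inverse_add_one[of "\<lambda>k. \<psi> (real (Suc k))"] pos ns
    by simp
qed

lemma measure_UN_good_words_ge:
  fixes \<psi> :: "real \<Rightarrow> real"
  assumes w: "w \<in> words n" and S: "finite S"
    and K: "\<And>K. K \<in> S \<Longrightarrow> n < K \<and> 64 \<le> K \<and> real (sum_list w) \<le> 128 * real K * ln (real K)"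
  defines "X \<equiv> \<Sum>K\<in>S. target_prob \<psi> K"
  shows "cyl_length w * X / 16 - 256 * cyl_length w * X\<^sup>2
           \<le> measure lborel (\<Union>K\<in>S. cyl K (\<lambda>u. take n u = w \<and> good_word \<psi> K u))"
proof -
  define A where "A K = cyl K (\<lambda>u. take n u = w \<and> good_word \<psi> K u)" for K
  have N: "0 \<le> cyl_length w" using cyl_length_pos[of w] w by (simp add: words_def)
  have "cyl_length w * X / 16 = (\<Sum>K\<in>S. cyl_length w * target_prob \<psi> K / 16)"
    by (simp add: X_def sum_distrib_left sum_divide_distrib)
  also have "\<dots> \<le> (\<Sum>K\<in>S. measure lborel (A K))"
    using cyl_measure_prefix_good_word_ge[OF w] K by (intro sum_mono) (auto simp: A_def cyl_measure_def)
  finally have single: "cyl_length w * X / 16 \<le> (\<Sum>K\<in>S. measure lborel (A K))" .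
  have "(\<Sum>i\<in>S. \<Sum>j\<in>{j\<in>S. j < i}. measure lborel (A j \<inter> A i))
      \<le> (\<Sum>i\<in>S. \<Sum>j\<in>{j\<in>S. j < i}. 256 * cyl_length w * target_prob \<psi> j * target_prob \<psi> i)"
  proof (intro sum_mono)
    fix i j assume "i \<in> S" "j \<in> {j\<in>S. j < i}"
    then have "n < j" "j < i" using K by auto
    then have "A j \<inter> A i = cyl i (\<lambda>u. take n u = w \<and> good_word \<psi> j (take j u) \<and> good_word \<psi> i u)"
      unfolding A_def cyl_Int_cyl[OF less_imp_le[OF \<open>j < i\<close>]] by (metis min.absorb1 less_imp_le take_take)
    then show "measure lborel (A j \<inter> A i) \<le> 256 * cyl_length w * target_prob \<psi> j * target_prob \<psi> i"
      using cyl_measure_prefix_good_words_le[OF w \<open>n < j\<close> \<open>j < i\<close>] by (simp add: cyl_measure_def)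
  qed
  also have "\<dots> \<le> (\<Sum>i\<in>S. \<Sum>j\<in>S. 256 * cyl_length w * target_prob \<psi> j * target_prob \<psi> i)"
    using S N target_prob_nonneg by (intro sum_mono sum_mono2) auto
  also have "\<dots> = 256 * cyl_length w * X\<^sup>2"
    by (simp add: X_def power2_eq_square sum_product sum_distrib_left sum_distrib_right mult_ac)
  finally have pairs: "(\<Sum>i\<in>S. \<Sum>j\<in>{j\<in>S. j < i}. measure lborel (A j \<inter> A i)) \<le> 256 * cyl_length w * X\<^sup>2" .
  show ?thesis
    using measure_UNION_ge_pairwise[OF S, of A lborel] single pairs
    by (simp add: A_def cyl_fmeasurable)
qed

section \<open>The good set has full measure\<close>

definition good_tail :: "(real \<Rightarrow> real) \<Rightarrow> nat \<Rightarrow> real set" where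
  "good_tail \<psi> m = (\<Union>K\<in>{m..}. cyl K (good_word \<psi> K))"

lemma good_tail_sets [measurable]: "good_tail \<psi> m \<in> sets borel"
  unfolding good_tail_def by (intro sets.countable_UN') auto

text \<open>Divergence of the series of target probabilities provides blocks S of indices of total mass
  between s and 2s (or a single index of mass at least s); on such a block the pairwise overlaps are
  of order s^2, so the events of the block fill a fixed fraction of every cylinder.\<close>
lemma good_tail_density:
  assumes ns: "\<not> summable (target_prob \<psi>)" and w: "w \<in> words n"
  shows "cyl_length w / 1048576 \<le> measure lborel (cyl n (\<lambda>u. u = w) \<inter> good_tail \<psi> m)"
proof -
  define s :: real where "s = 1 / 32768"
  obtain S where S: "finite S" "S \<subseteq> {m + n + sum_list w + 64..}" "s \<le> sum (target_prob \<psi>) S"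
      "sum (target_prob \<psi>) S \<le> 2 * s \<or> card S = 1"
    using not_summable_block[OF ns target_prob_nonneg, of s] by (auto simp: s_def)
  have K: "n < K \<and> 64 \<le> K \<and> real (sum_list w) \<le> 128 * real K * ln (real K)" "m \<le> K" if "K \<in> S" for K
  proof -
    have K: "m + n + sum_list w + 64 \<le> K" using S(2) that by auto
    have "1 \<le> ln (real K)" using K by (intro ln_ge_1) simp
    then have "real K * 1 \<le> real K * (128 * ln (real K))" by (intro mult_left_mono) auto
    then have "real K \<le> 128 * real K * ln (real K)" by (simp add: mult_ac)
    moreover have "real (sum_list w) \<le> real K" using K by simp
    ultimately show "n < K \<and> 64 \<le> K \<and> real (sum_list w) \<le> 128 * real K * ln (real K)"
      using K by (intro conjI; linarith)
    show "m \<le> K" using K by simp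
  qed
  define A where "A K = cyl K (\<lambda>u. take n u = w \<and> good_word \<psi> K u)" for K
  define N where "N = cyl_length w"
  define X where "X = sum (target_prob \<psi>) S"
  have N: "0 \<le> N" using cyl_length_pos[of w] w by (simp add: N_def words_def)
  have "(\<Union>K\<in>S. A K) \<subseteq> cyl n (\<lambda>u. u = w) \<inter> good_tail \<psi> m"
  proof
    fix x assume "x \<in> (\<Union>K\<in>S. A K)"
    then obtain K where "K \<in> S" "x \<in> A K" by auto
    then show "x \<in> cyl n (\<lambda>u. u = w) \<inter> good_tail \<psi> m"
      using K[OF \<open>K \<in> S\<close>] take_cf_digits[of n K x] by (auto simp: A_def good_tail_def cyl_def)
  qed
  then have UN: "measure lborel (\<Union>K\<in>S. A K) \<le> measure lborel (cyl n (\<lambda>u. u = w) \<inter> good_tail \<psi> m)"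
    using S(1) by (intro measure_mono_fmeasurable) (auto simp: A_def intro: fmeasurableI2[OF cyl_fmeasurable])
  from S(4) show ?thesis
  proof
    assume "sum (target_prob \<psi>) S \<le> 2 * s"
    then have "N * X * X \<le> N * X * (2 * s)"
      using mult_nonneg_nonneg[OF N sum_nonneg[OF target_prob_nonneg]] by (intro mult_left_mono) (auto simp: X_def)
    moreover have "N * s \<le> N * X" using S(3) N by (intro mult_left_mono) (auto simp: X_def)
    moreover have "N * X / 16 - 256 * N * X\<^sup>2 \<le> measure lborel (\<Union>K\<in>S. A K)"
      using measure_UN_good_words_ge[OF w S(1) K(1)] by (simp add: A_def N_def X_def)
    ultimately show ?thesis using UN N by (simp add: N_def s_def power2_eq_square)
  next
    assume "card S = 1"
    then obtain K where "S = {K}" by (auto simp: card_Suc_eq)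
    then have "N * X / 16 \<le> measure lborel (\<Union>K\<in>S. A K)"
      using cyl_measure_prefix_good_word_ge[OF w] K(1) by (simp add: A_def N_def X_def cyl_measure_def)
    moreover have "N * s \<le> N * X" using S(3) N by (intro mult_left_mono) (auto simp: X_def)
    ultimately show ?thesis using UN N by (simp add: N_def s_def)
  qed
qed

lemma measure_unit_irrats_diff_le:
  assumes sub: "cyl N P \<subseteq> U" and U: "U \<in> sets borel" and d: "\<delta> \<le> 1"
    and dens: "\<And>w. w \<in> words N \<Longrightarrow> \<delta> * cyl_length w \<le> measure lborel (cyl N (\<lambda>u. u = w) \<inter> U)"
  shows "measure lborel (unit_irrats - U) \<le> (1 - \<delta>) * cyl_measure N (\<lambda>u. \<not> P u)"
proof -
  define W where "W = {w \<in> words N. \<not> P w}"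
  have fin: "emeasure lborel (cyl N Q - U) = measure lborel (cyl N Q - U)" for Q
    using emeasure_cyl_eq[of N Q] emeasure_mono[of "cyl N Q - U" "cyl N Q" lborel]
    by (intro emeasure_eq_ennreal_measure) (auto simp: top_unique)
  have eq: "unit_irrats - U = (\<Union>w\<in>W. cyl N (\<lambda>u. u = w) - U)"
    using sub cf_digits_in_words by (auto simp: W_def cyl_def)
  have "emeasure lborel (unit_irrats - U) = (\<integral>\<^sup>+w. emeasure lborel (cyl N (\<lambda>u. u = w) - U) \<partial>count_space W)"
    unfolding eq
  proof (rule emeasure_UN_countable)
    show "disjoint_family_on (\<lambda>w. cyl N (\<lambda>u. u = w) - U) W"
      by (auto simp: disjoint_family_on_def cyl_def)
  qed (use U in auto)
  also have "\<dots> \<le> (\<integral>\<^sup>+w. ennreal (1 - \<delta>) * ennreal (cyl_length w) \<partial>count_space W)"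
  proof (intro nn_integral_mono)
    fix w assume "w \<in> space (count_space W)"
    then have w: "w \<in> words N" by (simp add: W_def)
    have "measure lborel (cyl N (\<lambda>u. u = w) - U)
        = measure lborel (cyl N (\<lambda>u. u = w)) - measure lborel (cyl N (\<lambda>u. u = w) \<inter> U)"
    proof -
      have "cyl N (\<lambda>u. u = w) - U = cyl N (\<lambda>u. u = w) - (cyl N (\<lambda>u. u = w) \<inter> U)" by auto
      then show ?thesis by (simp only:) (rule measure_Diff, use U in \<open>auto simp: emeasure_cyl_eq\<close>)
    qed
    also have "\<dots> \<le> (1 - \<delta>) * cyl_length w"
      using dens[OF w] cyl_measure_eq_word[OF w] by (simp add: cyl_measure_def algebra_simps)
    finally show "emeasure lborel (cyl N (\<lambda>u. u = w) - U) \<le> ennreal (1 - \<delta>) * ennreal (cyl_length w)"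
      using d by (simp add: fin ennreal_mult'[symmetric] ennreal_leI)
  qed
  also have "\<dots> = ennreal ((1 - \<delta>) * cyl_measure N (\<lambda>u. \<not> P u))"
    using d by (simp add: nn_integral_cmult emeasure_cyl W_def ennreal_mult' flip: emeasure_cyl_eq)
  finally show ?thesis
    using d fin[of "\<lambda>_. True"] by (simp add: cyl_def cyl_measure_nonneg ennreal_le_iff)
qed

text \<open>Outside the union, each level-N cylinder keeps at most a fraction 1 - \<delta> of its measure, so
  the measure of the complement is at most 1 - \<delta> times itself in the limit N \<rightarrow> \<infinity>.\<close>
lemma null_sets_unit_irrats_diff_UN_cyl:
  fixes P :: "nat \<Rightarrow> nat list \<Rightarrow> bool"
  assumes inc: "\<And>N. cyl N (P N) \<subseteq> cyl (Suc N) (P (Suc N))" and d: "0 < \<delta>" "\<delta> \<le> 1"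
    and dens: "\<And>n w. w \<in> words n \<Longrightarrow> \<delta> * cyl_length w \<le> measure lborel (cyl n (\<lambda>u. u = w) \<inter> (\<Union>N. cyl N (P N)))"
  shows "unit_irrats - (\<Union>N. cyl N (P N)) \<in> null_sets lborel"
proof -
  define U where "U = (\<Union>N. cyl N (P N))"
  have U: "U \<in> sets borel" by (auto simp: U_def)
  have "cyl N (\<lambda>u. \<not> P N u) = unit_irrats - cyl N (P N)" for N by (auto simp: cyl_def)
  then have le: "measure lborel (unit_irrats - U) \<le> (1 - \<delta>) * measure lborel (unit_irrats - cyl N (P N))" for N
    using measure_unit_irrats_diff_le[of N "P N" U \<delta>] U d dens by (auto simp: U_def cyl_measure_def)
  have "(\<lambda>N. measure lborel (unit_irrats - cyl N (P N))) \<longlonglongrightarrow> measure lborel (\<Inter>N. unit_irrats - cyl N (P N))"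
  proof (rule Lim_measure_decseq)
    show "decseq (\<lambda>N. unit_irrats - cyl N (P N))" using inc by (auto simp: decseq_Suc_iff)
  qed (auto simp: emeasure_unit_irrats_diff_finite)
  moreover have "(\<Inter>N. unit_irrats - cyl N (P N)) = unit_irrats - U" by (auto simp: U_def)
  ultimately have "measure lborel (unit_irrats - U) \<le> (1 - \<delta>) * measure lborel (unit_irrats - U)"
    using le by (intro LIMSEQ_le_const[OF tendsto_mult_left]) auto
  then have "measure lborel (unit_irrats - U) = 0" using d measure_nonneg[of lborel "unit_irrats - U"]
    by (simp add: algebra_simps mult_le_0_iff)
  then show ?thesis
    using emeasure_eq_ennreal_measure[OF emeasure_unit_irrats_diff_finite[of U]] U
    by (simp add: U_def null_sets_def)
qed

lemma good_tail_eq_UN_cyl: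
  "good_tail \<psi> m = (\<Union>N. cyl N (\<lambda>u. \<exists>K\<in>{m..N}. good_word \<psi> K (take K u)))"
  by (fastforce simp: good_tail_def cyl_def take_cf_digits)

lemma null_sets_unit_irrats_diff_good_tail:
  assumes "\<not> summable (target_prob \<psi>)"
  shows "unit_irrats - good_tail \<psi> m \<in> null_sets lborel"
  unfolding good_tail_eq_UN_cyl
proof (rule null_sets_unit_irrats_diff_UN_cyl[where \<delta> = "1 / 1048576"])
  show "cyl N (\<lambda>u. \<exists>K\<in>{m..N}. good_word \<psi> K (take K u))
      \<subseteq> cyl (Suc N) (\<lambda>u. \<exists>K\<in>{m..Suc N}. good_word \<psi> K (take K u))" for N
    by (fastforce simp: cyl_def take_cf_digits)
  show "1 / 1048576 * cyl_length w \<le> measure lborel (cyl n (\<lambda>u. u = w) \<inter>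
      (\<Union>N. cyl N (\<lambda>u. \<exists>K\<in>{m..N}. good_word \<psi> K (take K u))))" if "w \<in> words n" for n w
    using good_tail_density[OF assms that, of m] by (simp add: good_tail_eq_UN_cyl)
qed auto

lemma good_word_cf_quot:
  assumes x: "frac \<alpha> \<in> unit_irrats" and K: "1 \<le> K" and good: "good_word \<psi> K (cf_digits K (frac \<alpha>))"
  shows "\<psi> (real K) < real_of_int (cf_quot \<alpha> K) \<and> real_of_int (cf_quot \<alpha> K) < (real K)^2
         \<and> (\<Sum>l=1..K-1. real_of_int (cf_quot \<alpha> l)) \<le> 256 * real K * ln (real K)"
proof -
  have quot: "real_of_int (cf_quot \<alpha> l) = real (nat (cf_quot (frac \<alpha>) l))" if "1 \<le> l" for l
    using cf_quot_ge_1[OF x that] that by (simp add: cf_quot_frac)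
  have "(\<Sum>l=1..K-1. real_of_int (cf_quot \<alpha> l)) = real (sum_list (take (K - 1) (cf_digits K (frac \<alpha>))))"
    by (simp add: take_cf_digits sum_list_cf_digits quot)
  moreover have "cf_digits K (frac \<alpha>) ! (K - 1) = nat (cf_quot (frac \<alpha>) K)"
    using K by (simp add: nth_cf_digits)
  ultimately show ?thesis using good quot[OF K] by (simp add: good_word_def target_digits_def)
qed

lemma AE_good_cf_quot:
  assumes "\<not> summable (target_prob \<psi>)"
  shows "AE \<alpha> in lborel. \<exists>\<^sub>\<infinity>K. \<psi> (real K) < real_of_int (cf_quot \<alpha> K)
           \<and> real_of_int (cf_quot \<alpha> K) < (real K)^2
           \<and> (\<Sum>l=1..K-1. real_of_int (cf_quot \<alpha> l)) \<le> 256 * real K * ln (real K)"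
proof -
  have "\<rat> \<union> (\<Union>m. unit_irrats - good_tail \<psi> m) \<in> null_sets lborel"
    by (rule null_sets.Un[OF countable_imp_null_set_lborel[OF countable_rat] null_sets_UN])
      (rule null_sets_unit_irrats_diff_good_tail[OF assms])
  then show ?thesis
  proof (rule AE_mp[OF AE_frac_notin], intro AE_I2 impI)
    fix \<alpha> assume "frac \<alpha> \<notin> \<rat> \<union> (\<Union>m. unit_irrats - good_tail \<psi> m)"
    then have x: "frac \<alpha> \<in> unit_irrats" and tail: "\<And>m. frac \<alpha> \<in> good_tail \<psi> m"
      using frac_ge_0[of \<alpha>] frac_lt_1[of \<alpha>] Ints_subset_Rats by (fastforce simp: unit_irrats_def)+
    have "\<exists>K\<ge>m. 1 \<le> K \<and> good_word \<psi> K (cf_digits K (frac \<alpha>))" for m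
    proof -
      obtain K where "Suc m \<le> K" "good_word \<psi> K (cf_digits K (frac \<alpha>))"
        using tail[of "Suc m"] by (auto simp: good_tail_def cyl_def)
      then show ?thesis by (intro exI[of _ K]) auto
    qed
    then have "\<exists>\<^sub>\<infinity>K. 1 \<le> K \<and> good_word \<psi> K (cf_digits K (frac \<alpha>))"
      by (simp add: INFM_nat_le)
    then show "\<exists>\<^sub>\<infinity>K. \<psi> (real K) < real_of_int (cf_quot \<alpha> K) \<and> real_of_int (cf_quot \<alpha> K) < (real K)^2
              \<and> (\<Sum>l=1..K-1. real_of_int (cf_quot \<alpha> l)) \<le> 256 * real K * ln (real K)"
      by (rule INFM_mono) (use good_word_cf_quot[OF x] in blast)
  qed
qed

theorem corollary1:
  shows "\<exists>C>0. \<forall>\<psi> :: real \<Rightarrow> real.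
           (\<forall>x>0. \<psi> x > 0) \<and> mono_on {0<..} \<psi> \<and>
           \<not> summable (\<lambda>k. 1 / \<psi> (real (Suc k)))
           \<longrightarrow> (AE \<alpha> in lborel.
                 \<exists>\<^sub>\<infinity>K. \<psi> (real K) < real_of_int (cf_quot \<alpha> K)
                      \<and> real_of_int (cf_quot \<alpha> K) < (real K)^2
                      \<and> (\<Sum>l=1..K-1. real_of_int (cf_quot \<alpha> l)) \<le> C * real K * ln (real K))"
  using AE_good_cf_quot target_prob_not_summable by (intro exI[of _ 256]) auto

end
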